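(* For any $\tau_f\in(\tau_2^i,\tau_c)$ there exists a unique $\tau_{po}=\tau_{po}(\tau_f)\in(\tau_1^i,\tau_2^i)$ such that, with $\tau_b=\tau_{po}(\tau_f)$, $$p'(\tau_b)=\frac{2h(\tau_b)-2h(\tau_f)}{\tau_b^2-\tau_f^2}<p'(\tau_f)$$ and Liu's extended entropy condition $\frac{2h(\tau_f)-2h(\tau_b)}{\tau_f^2-\tau_b^2}<\frac{2h(\tau_f)-2h(\tau)}{\tau_f^2-\tau^2}$ for all $\tau\in(\tau_b,\tau_f)$ hold. Moreover, $\frac{d\tau_{po}}{d\tau_f}<0$ for $\tau_f\in(\tau_2^i,\tau_c)$.
   Context: The pressure is $p(\tau)=\frac{\mathcal S}{(\tau-1)^\gamma}-\frac{1}{\tau^2}$ for $\tau>1$, with constants $1<\gamma<2$, $\mathcal S>0$, assumed such that there exist $1<\tau_1^i<\tau_2^i$ with $p'<0$ on $(1,\infty)$, $p''>0$ on $(1,\tau_1^i)\cup(\tau_2^i,\infty)$, $p''<0$ on $(\tau_1^i,\tau_2^i)$. The function $h$ satisfies $h'(\tau)=\tau p'(\tau)$. $\tau_c$ denotes the unique $\tau_c\in(\tau_1^i,\infty)$ with $p'(\tau_1^i)=\frac{2h(\tau_c)-2h(\tau_1^i)}{\tau_c^2-(\tau_1^i)^2}$. *)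

theory Defs
  imports "HOL-Analysis.Analysis"
begin

definition pres :: "real \<Rightarrow> real \<Rightarrow> real \<Rightarrow> real" where
  "pres S \<gamma> \<tau> = S / ((\<tau> - 1) powr \<gamma>) - 1 / \<tau>\<^sup>2"

definition chord :: "(real \<Rightarrow> real) \<Rightarrow> real \<Rightarrow> real \<Rightarrow> real" where
  "chord h a b = (2 * h a - 2 * h b) / (a\<^sup>2 - b\<^sup>2)"

end

theory Submission
  imports Defs
begin

text \<open>
  Write \<open>P = p'\<close> and \<open>defect b t = 2h(t) - 2h(b) - P(b)(t\<^sup>2 - b\<^sup>2)\<close>; the chord condition
  \<open>P(b) = chord h t b\<close> says \<open>defect b t = 0\<close>. The partial derivatives are
  \<open>2t(P(t) - P(b))\<close> in \<open>t\<close> and \<open>-p''(b)(t\<^sup>2 - b\<^sup>2)\<close> in \<open>b\<close>. Hence for \<open>\<tau>\<^sub>2 < f < \<tau>\<^sub>c\<close> the map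
  \<open>b \<mapsto> defect b f\<close> increases strictly on \<open>[\<tau>\<^sub>1, \<tau>\<^sub>2]\<close>, from a negative value (as \<open>\<tau>\<^sub>c\<close> is the
  only zero of \<open>defect \<tau>\<^sub>1\<close> to the right of \<open>\<tau>\<^sub>1\<close>) to a positive one, and has a unique root
  \<open>\<tau>\<^sub>p\<^sub>o(f)\<close>. For fixed \<open>b\<close>, \<open>P(t) - P(b)\<close> is negative on \<open>(b, \<tau>\<^sub>2]\<close> and changes sign at most
  once after \<open>\<tau>\<^sub>2\<close>, so \<open>defect b\<close> falls and then rises; a zero at \<open>f > \<tau>\<^sub>2\<close> therefore forces
  \<open>P(b) < P(f)\<close> and \<open>defect b < 0\<close> on \<open>(b, f)\<close>, which is Liu's entropy condition. Implicit
  differentiation of \<open>defect (\<tau>\<^sub>p\<^sub>o f) f = 0\<close> gives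
  \<open>\<tau>\<^sub>p\<^sub>o'(f) = -2f(P(f) - P(b)) / (-p''(b)(f\<^sup>2 - b\<^sup>2)) < 0\<close> with \<open>b = \<tau>\<^sub>p\<^sub>o(f)\<close>.
\<close>

lemma pres_has_real_derivative:
  assumes "1 < x"
  shows "(pres S \<gamma> has_real_derivative S * (- \<gamma>) * (x - 1) powr (- \<gamma> - 1) + 2 / x ^ 3) (at x)"
proof -
  have "((\<lambda>x. S * (x - 1) powr (- \<gamma>) - 1 / x\<^sup>2) has_real_derivative
      S * (- \<gamma>) * (x - 1) powr (- \<gamma> - 1) + 2 / x ^ 3) (at x)"
    using assms by (auto intro!: derivative_eq_intros simp: field_simps power2_eq_square power3_eq_cube)
  then show ?thesis
    by (rule has_field_derivative_transform_within_open[of _ _ _ "{1<..}"])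
       (use assms in \<open>auto simp: pres_def powr_minus_divide\<close>)
qed

lemma deriv_pres_has_real_derivative:
  assumes "1 < t"
  shows "(deriv (pres S \<gamma>) has_real_derivative deriv (deriv (pres S \<gamma>)) t) (at t)"
proof -
  have deriv_pres: "deriv (pres S \<gamma>) x = S * (- \<gamma>) * (x - 1) powr (- \<gamma> - 1) + 2 / x ^ 3"
    if "x \<in> {1<..}" for x
    using pres_has_real_derivative[of x S \<gamma>] that DERIV_imp_deriv by auto
  have "((\<lambda>x. S * (- \<gamma>) * (x - 1) powr (- \<gamma> - 1) + 2 / x ^ 3) has_real_derivative
      S * (- \<gamma>) * ((- \<gamma> - 1) * (t - 1) powr (- \<gamma> - 2)) - 6 / t ^ 4) (at t)"
    using assms by (auto intro!: derivative_eq_intros simp: field_simps)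
  then have "(deriv (pres S \<gamma>) has_real_derivative
      S * (- \<gamma>) * ((- \<gamma> - 1) * (t - 1) powr (- \<gamma> - 2)) - 6 / t ^ 4) (at t)"
    by (rule has_field_derivative_transform_within_open[of _ _ _ "{1<..}"])
       (use assms deriv_pres in auto)
  then show ?thesis
    using DERIV_imp_deriv by metis
qed

lemma chord_commute: "chord h a b = chord h b a"
  unfolding chord_def by (metis minus_divide_divide minus_diff_eq)

lemma has_real_derivative_pos_imp_less:
  fixes f f' :: "real \<Rightarrow> real"
  assumes "a < b"
    and "\<And>x. a \<le> x \<Longrightarrow> x \<le> b \<Longrightarrow> (f has_real_derivative f' x) (at x)"
    and "\<And>x. a < x \<Longrightarrow> x < b \<Longrightarrow> f' x > 0"
  shows "f a < f b"
proof (rule DERIV_pos_imp_increasing_open[OF assms(1)])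
  fix x assume "a < x" "x < b"
  then show "\<exists>y. (f has_real_derivative y) (at x) \<and> y > 0"
    using assms(2,3) by (intro exI[of _ "f' x"]) simp
next
  show "continuous_on {a..b} f"
    using assms(2) by (intro DERIV_atLeastAtMost_imp_continuous_on) blast
qed

lemma has_real_derivative_neg_imp_less:
  fixes f f' :: "real \<Rightarrow> real"
  assumes "a < b"
    and "\<And>x. a \<le> x \<Longrightarrow> x \<le> b \<Longrightarrow> (f has_real_derivative f' x) (at x)"
    and "\<And>x. a < x \<Longrightarrow> x < b \<Longrightarrow> f' x < 0"
  shows "f b < f a"
proof (rule DERIV_neg_imp_decreasing_open[OF assms(1)])
  fix x assume "a < x" "x < b"
  then show "\<exists>y. (f has_real_derivative y) (at x) \<and> y < 0"
    using assms(2,3) by (intro exI[of _ "f' x"]) simp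
next
  show "continuous_on {a..b} f"
    using assms(2) by (intro DERIV_atLeastAtMost_imp_continuous_on) blast
qed

lemma isCont_implicit_root:
  fixes G :: "real \<Rightarrow> real \<Rightarrow> real" and g :: "real \<Rightarrow> real"
  assumes "a < g x0" "g x0 < c"
    and G_mono: "\<And>b b'. a \<le> b \<Longrightarrow> b < b' \<Longrightarrow> b' \<le> c \<Longrightarrow> G b x0 < G b' x0"
    and root: "G (g x0) x0 = 0"
    and G_cont: "\<And>b. a \<le> b \<Longrightarrow> b \<le> c \<Longrightarrow> isCont (G b) x0"
    and near: "eventually (\<lambda>x. continuous_on {a..c} (\<lambda>b. G b x) \<and>
                 (\<forall>b\<in>{a<..<c}. G b x = 0 \<longrightarrow> g x = b)) (at x0)"
  shows "isCont g x0"
  unfolding isCont_def tendsto_iff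
proof (intro allI impI)
  fix e :: real
  assume "e > 0"
  define d where "d = min e (min (g x0 - a) (c - g x0)) / 2"
  have d: "0 < d" "d < e" "a < g x0 - d" "g x0 + d < c"
    using \<open>e > 0\<close> assms(1,2) unfolding d_def by (auto simp: min_def field_simps)
  have "G (g x0 - d) x0 < 0" "G (g x0 + d) x0 > 0"
    using G_mono[of "g x0 - d" "g x0"] G_mono[of "g x0" "g x0 + d"] root d by auto
  then have "eventually (\<lambda>x. G (g x0 - d) x < 0) (at x0)" "eventually (\<lambda>x. G (g x0 + d) x > 0) (at x0)"
    using G_cont[of "g x0 - d"] G_cont[of "g x0 + d"] d
    by (auto simp: isCont_def intro: order_tendstoD)
  with near show "eventually (\<lambda>x. dist (g x) (g x0) < e) (at x0)"
  proof eventually_elim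
    case (elim x)
    have "continuous_on {g x0 - d..g x0 + d} (\<lambda>b. G b x)"
      using elim d by (auto elim: continuous_on_subset)
    then obtain z where z: "g x0 - d \<le> z" "z \<le> g x0 + d" "G z x = 0"
      using IVT'[of "\<lambda>b. G b x" "g x0 - d" 0 "g x0 + d"] elim d by auto
    then have "g x = z"
      using elim d by auto
    with z d show ?case
      by (simp add: dist_real_def abs_le_iff)
  qed
qed

lemma has_real_derivative_of_slope_relation:
  fixes g M N :: "real \<Rightarrow> real"
  assumes rel: "eventually (\<lambda>x. (g x - g x0) * M x = (x - x0) * N x) (at x0)"
    and "isCont M x0" "isCont N x0" "M x0 \<noteq> 0"
  shows "(g has_real_derivative N x0 / M x0) (at x0)"
  unfolding has_field_derivative_iff
proof (rule Lim_transform_eventually)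
  show "((\<lambda>x. N x / M x) \<longlongrightarrow> N x0 / M x0) (at x0)"
    using assms(2-4) unfolding isCont_def by (intro tendsto_intros)
  have "eventually (\<lambda>x. M x \<noteq> 0) (at x0)"
    using assms(2,4) unfolding isCont_def by (rule tendsto_imp_eventually_ne)
  moreover have "eventually (\<lambda>x. x \<noteq> x0) (at x0)"
    by (simp add: eventually_at_filter)
  ultimately show "eventually (\<lambda>x. N x / M x = (g x - g x0) / (x - x0)) (at x0)"
    using rel by eventually_elim (simp add: frac_eq_eq mult.commute)
qed

locale pressure_inflection =
  fixes P P2 h :: "real \<Rightarrow> real" and t1 t2 tc :: real
  assumes t12: "1 < t1" "t1 < t2"
    and P_deriv: "\<And>t. 1 < t \<Longrightarrow> (P has_real_derivative P2 t) (at t)"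
    and h_deriv: "\<And>t. 1 < t \<Longrightarrow> (h has_real_derivative t * P t) (at t)"
    and P2_pos: "\<And>t. t2 < t \<Longrightarrow> P2 t > 0"
    and P2_neg: "\<And>t. t1 < t \<Longrightarrow> t < t2 \<Longrightarrow> P2 t < 0"
    and tc: "t1 < tc" "P t1 = chord h tc t1"
    and tc_unique: "\<And>t. t1 < t \<Longrightarrow> P t1 = chord h t t1 \<Longrightarrow> t = tc"
begin

lemma P_less_right: "t2 \<le> x \<Longrightarrow> x < y \<Longrightarrow> P x < P y"
  using t12 by (intro has_real_derivative_pos_imp_less[of x y P P2]) (auto intro: P_deriv P2_pos)

lemma P_less_mid: "t1 \<le> x \<Longrightarrow> x < y \<Longrightarrow> y \<le> t2 \<Longrightarrow> P y < P x"
  using t12 by (intro has_real_derivative_neg_imp_less[of x y P P2]) (auto intro: P_deriv P2_neg)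

definition defect :: "real \<Rightarrow> real \<Rightarrow> real" where
  "defect b t = 2 * h t - 2 * h b - P b * (t\<^sup>2 - b\<^sup>2)"

lemma defect_self [simp]: "defect b b = 0"
  by (simp add: defect_def)

lemma defect_diff_eq_chord:
  assumes "\<tau>\<^sup>2 \<noteq> f\<^sup>2"
  shows "defect b \<tau> - defect b f = (f\<^sup>2 - \<tau>\<^sup>2) * (P b - chord h f \<tau>)"
proof -
  have "f\<^sup>2 - \<tau>\<^sup>2 \<noteq> 0"
    using assms by simp
  then show ?thesis
    unfolding defect_def chord_def by (simp add: field_simps)
qed

lemma chord_eq_iff_defect_eq_0:
  assumes "b\<^sup>2 \<noteq> f\<^sup>2"
  shows "P b = chord h f b \<longleftrightarrow> defect b f = 0"
  using defect_diff_eq_chord[of b f b] assms by auto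

lemma defect_deriv_right: "1 < t \<Longrightarrow> (defect b has_real_derivative 2 * t * (P t - P b)) (at t)"
  unfolding defect_def[abs_def] by (auto intro!: derivative_eq_intros h_deriv simp: algebra_simps)

lemma defect_deriv_left:
  "1 < b \<Longrightarrow> ((\<lambda>b. defect b f) has_real_derivative - P2 b * (f\<^sup>2 - b\<^sup>2)) (at b)"
  unfolding defect_def by (auto intro!: derivative_eq_intros h_deriv P_deriv simp: algebra_simps)

lemma defect_neg_mid:
  assumes "t1 \<le> b" "b < t" "t \<le> t2"
  shows "defect b t < 0"
proof -
  have "defect b t < defect b b"
  proof (rule has_real_derivative_neg_imp_less[OF \<open>b < t\<close> defect_deriv_right])
    fix z assume "b < z" "z < t"
    then have "P z < P b"
      using assms P_less_mid by auto
    then show "2 * z * (P z - P b) < 0"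
      using \<open>b < z\<close> assms t12 by (simp add: mult_pos_neg)
  qed (use assms t12 in auto)
  then show ?thesis
    by simp
qed

lemma defect_decreasing_right:
  assumes "t2 \<le> s" "s < t" "P t \<le> P b"
  shows "defect b t < defect b s"
proof (rule has_real_derivative_neg_imp_less[OF \<open>s < t\<close> defect_deriv_right])
  fix z assume "s < z" "z < t"
  then have "P z < P b"
    using assms P_less_right[of z t] by auto
  then show "2 * z * (P z - P b) < 0"
    using \<open>s < z\<close> assms t12 by (simp add: mult_pos_neg)
qed (use assms t12 in auto)

lemma defect_increasing_right:
  assumes "t2 \<le> s" "s < t" "P b \<le> P s"
  shows "defect b s < defect b t"
proof (rule has_real_derivative_pos_imp_less[OF \<open>s < t\<close> defect_deriv_right])
  fix z assume "s < z" "z < t"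
  then have "P b < P z"
    using assms P_less_right[of s z] by auto
  then show "2 * z * (P z - P b) > 0"
    using \<open>s < z\<close> assms t12 by simp
qed (use assms t12 in auto)

lemma defect_strict_mono_left:
  assumes "t1 \<le> a" "a < c" "c \<le> t2" "t2 < f"
  shows "defect a f < defect c f"
proof (rule has_real_derivative_pos_imp_less[OF \<open>a < c\<close> defect_deriv_left])
  fix z assume "a < z" "z < c"
  then have "P2 z < 0" "z\<^sup>2 < f\<^sup>2"
    using assms t12 P2_neg power_strict_mono[of z f 2] by auto
  then show "- P2 z * (f\<^sup>2 - z\<^sup>2) > 0"
    by (simp add: mult_neg_pos)
qed (use assms t12 in auto)

lemma defect_t1_eq_0_iff:
  assumes "t1 < t"
  shows "defect t1 t = 0 \<longleftrightarrow> t = tc"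
proof -
  have "t1\<^sup>2 \<noteq> t\<^sup>2"
    using power_strict_mono[of t1 t 2] assms t12 by simp
  then have "defect t1 t = 0 \<longleftrightarrow> P t1 = chord h t t1"
    using chord_eq_iff_defect_eq_0 by simp
  then show ?thesis
    using tc tc_unique assms by blast
qed

lemma defect_t1_neg:
  assumes "t1 < t" "t < tc"
  shows "defect t1 t < 0"
proof (cases "t \<le> t2")
  case True
  then show ?thesis
    using defect_neg_mid assms by simp
next
  case False
  show ?thesis
  proof (rule ccontr)
    assume "\<not> defect t1 t < 0"
    moreover have "defect t1 t2 < 0"
      using defect_neg_mid[of t1 t2] t12 by simp
    moreover have "continuous_on {t2..t} (defect t1)"
      by (rule DERIV_atLeastAtMost_imp_continuous_on, rule exI, rule defect_deriv_right)
         (use t12 in auto)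
    ultimately obtain z where "t2 \<le> z" "z \<le> t" "defect t1 z = 0"
      using IVT'[of "defect t1" t2 0 t] False by auto
    then show False
      using defect_t1_eq_0_iff[of z] assms t12 by auto
  qed
qed

lemma ex1_root:
  assumes "t2 < f" "f < tc"
  shows "\<exists>!b. t1 < b \<and> b < t2 \<and> defect b f = 0"
proof (rule ex_ex1I)
  have "defect t1 f < 0"
    using defect_t1_neg assms t12 by simp
  moreover have "defect t2 f > 0"
    using defect_increasing_right[of t2 f t2] assms by simp
  moreover have "continuous_on {t1..t2} (\<lambda>b. defect b f)"
    by (rule DERIV_atLeastAtMost_imp_continuous_on, rule exI, rule defect_deriv_left)
       (use t12 in auto)
  ultimately obtain b where "t1 \<le> b" "b \<le> t2" "defect b f = 0"
    using IVT'[of "\<lambda>b. defect b f" t1 0 t2] t12 by auto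
  moreover have "b \<noteq> t1" "b \<noteq> t2"
    using \<open>defect t1 f < 0\<close> \<open>defect t2 f > 0\<close> \<open>defect b f = 0\<close> by auto
  ultimately show "\<exists>b. t1 < b \<and> b < t2 \<and> defect b f = 0"
    by (intro exI[of _ b]) simp
next
  fix b b'
  assume b: "t1 < b \<and> b < t2 \<and> defect b f = 0" and b': "t1 < b' \<and> b' < t2 \<and> defect b' f = 0"
  have "\<not> b < b'" "\<not> b' < b"
    using defect_strict_mono_left[of b b' f] defect_strict_mono_left[of b' b f] assms b b' by auto
  then show "b = b'"
    by simp
qed

lemma root_P_less:
  assumes "t1 < b" "b < t2" "t2 < f" "defect b f = 0"
  shows "P b < P f"
proof (rule ccontr)
  assume "\<not> P b < P f"
  then have "defect b f < defect b t2"
    using defect_decreasing_right[of t2 f b] assms by simp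
  moreover have "defect b t2 < 0"
    using defect_neg_mid[of b t2] assms by simp
  ultimately show False
    using assms by simp
qed

lemma root_defect_neg:
  assumes "t1 < b" "b < t2" "t2 < f" "defect b f = 0" "b < t" "t < f"
  shows "defect b t < 0"
proof -
  consider "t \<le> t2" | "t2 < t" "P t \<le> P b" | "t2 < t" "P b < P t"
    by linarith
  then show ?thesis
  proof cases
    case 1
    then show ?thesis
      using defect_neg_mid assms by simp
  next
    case 2
    then show ?thesis
      using defect_decreasing_right[of t2 t b] defect_neg_mid[of b t2] assms by simp
  next
    case 3
    then show ?thesis
      using defect_increasing_right[of t f b] assms by simp
  qed
qed

lemma shock_conditions_iff_root:
  assumes "t1 < b" "b < t2" "t2 < f" "f < tc"
  shows "(P b = chord h b f \<and> chord h b f < P f \<and>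
           (\<forall>\<tau>. b < \<tau> \<and> \<tau> < f \<longrightarrow> chord h f b < chord h f \<tau>))
         \<longleftrightarrow> defect b f = 0"
proof -
  have "b\<^sup>2 < f\<^sup>2"
    using assms t12 power_strict_mono[of b f 2] by simp
  then have chord_iff: "P b = chord h b f \<longleftrightarrow> defect b f = 0"
    using chord_eq_iff_defect_eq_0[of b f] by (simp add: chord_commute)
  have "chord h b f < P f \<and> (\<forall>\<tau>. b < \<tau> \<and> \<tau> < f \<longrightarrow> chord h f b < chord h f \<tau>)"
    if root: "defect b f = 0"
  proof (intro conjI allI impI)
    have P_b: "P b = chord h f b"
      using chord_iff root by (simp add: chord_commute)
    then show "chord h b f < P f"
      using root_P_less[of b f] root assms by (simp add: chord_commute)
    fix \<tau> assume \<tau>: "b < \<tau> \<and> \<tau> < f"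
    have "\<tau>\<^sup>2 < f\<^sup>2"
      using \<tau> assms t12 power_strict_mono[of \<tau> f 2] by simp
    moreover have "defect b \<tau> < 0"
      using root_defect_neg[of b f \<tau>] root \<tau> assms by simp
    ultimately have "(f\<^sup>2 - \<tau>\<^sup>2) * (P b - chord h f \<tau>) < 0"
      using defect_diff_eq_chord[of \<tau> f b] root by simp
    with \<open>\<tau>\<^sup>2 < f\<^sup>2\<close> have "P b < chord h f \<tau>"
      by (simp add: mult_less_0_iff)
    then show "chord h f b < chord h f \<tau>"
      using P_b by simp
  qed
  with chord_iff show ?thesis
    by blast
qed

definition tau_po :: "real \<Rightarrow> real" where
  "tau_po f = (THE b. t1 < b \<and> b < t2 \<and> defect b f = 0)"

lemma tau_po: "t2 < f \<Longrightarrow> f < tc \<Longrightarrow> t1 < tau_po f \<and> tau_po f < t2 \<and> defect (tau_po f) f = 0"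
  unfolding tau_po_def by (rule theI', rule ex1_root)

lemma tau_po_eqI: "t2 < f \<Longrightarrow> f < tc \<Longrightarrow> t1 < b \<Longrightarrow> b < t2 \<Longrightarrow> defect b f = 0 \<Longrightarrow> tau_po f = b"
  using ex1_root tau_po by blast

lemma eventually_in_shock_range:
  "t2 < f0 \<Longrightarrow> f0 < tc \<Longrightarrow> eventually (\<lambda>f. t2 < f \<and> f < tc) (at f0)"
  unfolding eventually_at_topological by (intro exI[of _ "{t2<..<tc}"]) auto

lemma isCont_tau_po:
  assumes "t2 < f0" "f0 < tc"
  shows "isCont tau_po f0"
proof (rule isCont_implicit_root[where G = defect and a = t1 and c = t2])
  show "t1 < tau_po f0" "tau_po f0 < t2" "defect (tau_po f0) f0 = 0"
    using tau_po[OF assms] by auto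
  show "defect b f0 < defect b' f0" if "t1 \<le> b" "b < b'" "b' \<le> t2" for b b'
    using defect_strict_mono_left that assms by simp
  show "isCont (defect b) f0" for b
    using defect_deriv_right assms t12 by (meson DERIV_isCont less_trans)
  have cont: "continuous_on {t1..t2} (\<lambda>b. defect b f)" for f
    by (rule DERIV_atLeastAtMost_imp_continuous_on, rule exI, rule defect_deriv_left)
       (use t12 in auto)
  show "eventually (\<lambda>f. continuous_on {t1..t2} (\<lambda>b. defect b f) \<and>
          (\<forall>b\<in>{t1<..<t2}. defect b f = 0 \<longrightarrow> tau_po f = b)) (at f0)"
    using eventually_in_shock_range[OF assms] by eventually_elim (auto intro: cont tau_po_eqI)
qed

lemma tau_po_has_negative_derivative:
  assumes "t2 < f0" "f0 < tc"
  shows "\<exists>D. (tau_po has_real_derivative D) (at f0) \<and> D < 0"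
proof -
  define b0 where "b0 = tau_po f0"
  have b0: "t1 < b0" "b0 < t2" "defect b0 f0 = 0"
    using tau_po[OF assms] unfolding b0_def by auto
  obtain sP where sP: "\<And>z. P z - P b0 = sP z * (z - b0)" "isCont sP b0" "sP b0 = P2 b0"
    using P_deriv[of b0] b0 t12 CARAT_DERIV by (metis less_trans)
  obtain sH where sH: "\<And>z. h z - h b0 = sH z * (z - b0)" "isCont sH b0" "sH b0 = b0 * P b0"
    using h_deriv[of b0] b0 t12 CARAT_DERIV by (metis less_trans)
  obtain sF where sF: "\<And>z. h z - h f0 = sF z * (z - f0)" "isCont sF f0" "sF f0 = f0 * P f0"
    using h_deriv[of f0] assms t12 CARAT_DERIV by (metis less_trans)
  \<comment> \<open>Caratheodory slopes turn \<open>defect (tau_po f) f - defect b0 f0 = 0\<close> into a linear relation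
      between \<open>tau_po f - b0\<close> and \<open>f - f0\<close> whose coefficients are continuous at \<open>f0\<close>.\<close>
  define M where "M f = P b0 * (tau_po f + b0) - 2 * sH (tau_po f) - sP (tau_po f) * (f\<^sup>2 - (tau_po f)\<^sup>2)" for f
  define N where "N f = P b0 * (f + f0) - 2 * sF f" for f
  have "eventually (\<lambda>f. (tau_po f - tau_po f0) * M f = (f - f0) * N f) (at f0)"
    using eventually_in_shock_range[OF assms]
  proof eventually_elim
    case (elim f)
    define b where "b = tau_po f"
    have "0 = defect b f - defect b0 f0"
      using tau_po[of f] elim b0 unfolding b_def by simp
    also have "\<dots> = 2 * (h f - h f0) - 2 * (h b - h b0)
        - ((P b - P b0) * (f\<^sup>2 - b\<^sup>2) + P b0 * ((f\<^sup>2 - b\<^sup>2) - (f0\<^sup>2 - b0\<^sup>2)))"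
      unfolding defect_def by (simp add: algebra_simps)
    also have "\<dots> = 2 * (sF f * (f - f0)) - 2 * (sH b * (b - b0))
        - (sP b * (b - b0) * (f\<^sup>2 - b\<^sup>2) + P b0 * ((f\<^sup>2 - b\<^sup>2) - (f0\<^sup>2 - b0\<^sup>2)))"
      by (simp only: sF sH sP)
    also have "\<dots> = (b - b0) * M f - (f - f0) * N f"
      unfolding M_def N_def b_def[symmetric] by (simp add: algebra_simps power2_eq_square)
    finally show ?case
      unfolding b_def b0_def by simp
  qed
  moreover have "isCont M f0"
  proof -
    have "isCont tau_po f0"
      using isCont_tau_po[OF assms] .
    moreover have "isCont (\<lambda>f. sH (tau_po f)) f0" "isCont (\<lambda>f. sP (tau_po f)) f0"
      using isCont_o2[OF calculation] sH(2) sP(2) unfolding b0_def by auto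
    ultimately show ?thesis
      unfolding M_def by (intro continuous_intros)
  qed
  moreover have "isCont N f0"
    unfolding N_def using sF(2) by (intro continuous_intros)
  moreover have "M f0 = - P2 b0 * (f0\<^sup>2 - b0\<^sup>2)"
    unfolding M_def b0_def[symmetric] using sH sP by (simp add: algebra_simps)
  then have "M f0 > 0"
    using P2_neg[of b0] power_strict_mono[of b0 f0 2] b0 assms t12 by (simp add: mult_neg_pos)
  moreover have "N f0 = - 2 * f0 * (P f0 - P b0)"
    unfolding N_def using sF by (simp add: algebra_simps)
  then have "N f0 < 0"
    using root_P_less[of b0 f0] b0 assms t12 by (simp add: mult_pos_neg)
  ultimately show ?thesis
    using has_real_derivative_of_slope_relation[of tau_po f0 M N] by (auto intro!: divide_neg_pos)
qed

end

theorem proposition3p3: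
  fixes S \<gamma> \<tau>1 \<tau>2 \<tau>c :: real and h :: "real \<Rightarrow> real"
  assumes gam: "1 < \<gamma>" "\<gamma> < 2" and S: "S > 0"
    and t12: "1 < \<tau>1" "\<tau>1 < \<tau>2"
    and p1: "\<forall>\<tau>>1. deriv (pres S \<gamma>) \<tau> < 0"
    and p2pos: "\<forall>\<tau>. (1 < \<tau> \<and> \<tau> < \<tau>1) \<or> \<tau>2 < \<tau> \<longrightarrow> deriv (deriv (pres S \<gamma>)) \<tau> > 0"
    and p2neg: "\<forall>\<tau>. \<tau>1 < \<tau> \<and> \<tau> < \<tau>2 \<longrightarrow> deriv (deriv (pres S \<gamma>)) \<tau> < 0"
    and hder: "\<forall>\<tau>>1. (h has_real_derivative \<tau> * deriv (pres S \<gamma>) \<tau>) (at \<tau>)"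
    and tc: "\<tau>1 < \<tau>c" "deriv (pres S \<gamma>) \<tau>1 = chord h \<tau>c \<tau>1"
    and tc_unique: "\<forall>t. \<tau>1 < t \<and> deriv (pres S \<gamma>) \<tau>1 = chord h t \<tau>1 \<longrightarrow> t = \<tau>c"
  shows "\<exists>\<tau>po :: real \<Rightarrow> real.
     (\<forall>\<tau>f. \<tau>2 < \<tau>f \<and> \<tau>f < \<tau>c \<longrightarrow>
        (\<exists>!\<tau>b. \<tau>1 < \<tau>b \<and> \<tau>b < \<tau>2 \<and>
           deriv (pres S \<gamma>) \<tau>b = chord h \<tau>b \<tau>f \<and>
           chord h \<tau>b \<tau>f < deriv (pres S \<gamma>) \<tau>f \<and>
           (\<forall>\<tau>. \<tau>b < \<tau> \<and> \<tau> < \<tau>f \<longrightarrow> chord h \<tau>f \<tau>b < chord h \<tau>f \<tau>)) \<and>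
        \<tau>1 < \<tau>po \<tau>f \<and> \<tau>po \<tau>f < \<tau>2 \<and>
        deriv (pres S \<gamma>) (\<tau>po \<tau>f) = chord h (\<tau>po \<tau>f) \<tau>f \<and>
        chord h (\<tau>po \<tau>f) \<tau>f < deriv (pres S \<gamma>) \<tau>f \<and>
        (\<forall>\<tau>. \<tau>po \<tau>f < \<tau> \<and> \<tau> < \<tau>f \<longrightarrow> chord h \<tau>f (\<tau>po \<tau>f) < chord h \<tau>f \<tau>) \<and>
        (\<exists>D. (\<tau>po has_real_derivative D) (at \<tau>f) \<and> D < 0))"
proof -
  \<comment> \<open>Only the sign of \<open>p''\<close> on \<open>(\<tau>1, \<tau>2)\<close> and on \<open>(\<tau>2, \<infinity>)\<close> is used.\<close>
  interpret pressure_inflection "deriv (pres S \<gamma>)" "deriv (deriv (pres S \<gamma>))" h \<tau>1 \<tau>2 \<tau>c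
    using t12 deriv_pres_has_real_derivative p2pos p2neg hder tc tc_unique by unfold_locales auto
  let ?shock = "\<lambda>f b. \<tau>1 < b \<and> b < \<tau>2 \<and>
    deriv (pres S \<gamma>) b = chord h b f \<and> chord h b f < deriv (pres S \<gamma>) f \<and>
    (\<forall>\<tau>. b < \<tau> \<and> \<tau> < f \<longrightarrow> chord h f b < chord h f \<tau>)"
  have "(\<exists>!b. ?shock f b) \<and> ?shock f (tau_po f) \<and> (\<exists>D. (tau_po has_real_derivative D) (at f) \<and> D < 0)"
    if f: "\<tau>2 < f" "f < \<tau>c" for f
  proof -
    have shock_iff: "?shock f b \<longleftrightarrow> \<tau>1 < b \<and> b < \<tau>2 \<and> defect b f = 0" for b
      using shock_conditions_iff_root[of b f] f by blast
    have "\<exists>!b. ?shock f b"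
      unfolding shock_iff using ex1_root f by simp
    moreover have "?shock f (tau_po f)"
      unfolding shock_iff using tau_po f by simp
    moreover have "\<exists>D. (tau_po has_real_derivative D) (at f) \<and> D < 0"
      using tau_po_has_negative_derivative f by simp
    ultimately show ?thesis
      by blast
  qed
  then show ?thesis
    by (intro exI[of _ tau_po] allI impI) blast
qed

end
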